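(* Let $d$ be an even positive integer with $d\notin\{2,4,8\}$. For $x\in\mathbb{R}$ let ${\bm p}_x\in\mathbb{R}^d$ be defined by $({\bm p}_x)_{2i}=\sin(\omega_i x)$, $({\bm p}_x)_{2i+1}=\cos(\omega_i x)$ for $i=0,\dots,\tfrac d2-1$, with $\omega_i=10000^{-2i/d}$. Then the map $\mathbb{N}_{>0}\to\mathbb{R}^d$, $a\mapsto{\bm p}_a$, is injective; consequently the map $\mathbb{N}_{>0}^2\to\mathbb{R}^{2d}$, $(a,b)\mapsto[{\bm p}_a\,\|\,{\bm p}_b]$, is injective.
   Context: $[{\bm u}\,\|\,{\bm v}]$ denotes concatenation of vectors. $\mathbb{N}_{>0}$ denotes the positive integers. *)

theory Defs
  imports Complex_Main
begin

definition omega :: "nat \<Rightarrow> nat \<Rightarrow> real" where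
  "omega d i = 10000 powr (- (2 * real i) / real d)"

definition pe :: "nat \<Rightarrow> real \<Rightarrow> real list" where
  "pe d x = map (\<lambda>j. if even j then sin (omega d (j div 2) * x)
                                 else cos (omega d (j div 2) * x)) [0..<d]"

end

theory Submission
  imports Defs "HOL-Computational_Algebra.Primes"
begin

(*
  The first four coordinates of p_x are sin x, cos x, sin (w x), cos (w x) with w = omega_1.
  If p_x = p_y, they force x - y = 2 pi k and w (x - y) = 2 pi m for integers k, m,
  so x = y unless w = m / k is rational.  But w^d = 10^(-8), and a rational d-th root
  of 10^8 exists only if d divides the 2-adic valuation 8.  Hence p is injective on all
  of the reals as soon as d >= 4 and d does not divide 8.
*)

lemma dvd_multiplicity_if_mult_power_eq_power:
  fixes m n k p :: "'a :: factorial_semiring"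
  assumes "prime p" "m \<noteq> 0" "k \<noteq> 0" "m ^ d * n = k ^ d"
  shows "d dvd multiplicity p n"
proof -
  have "n \<noteq> 0" using assms by auto
  have "prime_elem p" using assms(1) by simp
  have "d * multiplicity p m + multiplicity p n = multiplicity p (m ^ d * n)"
    using \<open>prime_elem p\<close> assms(2) \<open>n \<noteq> 0\<close>
    by (simp add: prime_elem_multiplicity_mult_distrib prime_elem_multiplicity_power_distrib)
  also have "\<dots> = d * multiplicity p k"
    using \<open>prime_elem p\<close> assms(3,4) by (simp add: prime_elem_multiplicity_power_distrib)
  finally have "d * multiplicity p m + multiplicity p n = d * multiplicity p k" .
  then have "multiplicity p n = d * (multiplicity p k - multiplicity p m)"
    by (simp add: diff_mult_distrib2)
  then show ?thesis by simp
qed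

lemma multiplicity_2_power_10: "multiplicity (2::int) (10 ^ n) = n"
proof -
  have "multiplicity (2::int) (2 ^ n * 5 ^ n) = n + multiplicity 2 (5 ^ n :: int)"
    by (simp add: prime_elem_multiplicity_mult_distrib multiplicity_prime_power)
  moreover have "multiplicity (2::int) (5 ^ n) = 0"
    by (simp add: not_dvd_imp_multiplicity_0 prime_dvd_power_iff)
  ultimately show ?thesis by (simp flip: power_mult_distrib)
qed

lemma omega_0 [simp]: "omega d 0 = 1"
  by (simp add: omega_def)

lemma omega_1_power: "d > 0 \<Longrightarrow> omega d 1 ^ d * 10 ^ 8 = 1"
  by (simp add: omega_def powr_realpow[symmetric] powr_powr powr_minus field_simps)

lemma omega_1_not_rational:
  assumes "d > 0" "\<not> d dvd 8"
  shows "omega d 1 \<notin> \<rat>"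
proof
  assume "omega d 1 \<in> \<rat>"
  then obtain p q :: int where "q > 0" and pq: "omega d 1 = of_int p / of_int q"
    by (auto elim: Rats_cases')
  have "real_of_int (p ^ d * 10 ^ 8) = real_of_int (q ^ d)"
    using omega_1_power[OF \<open>d > 0\<close>] \<open>q > 0\<close> unfolding pq by (simp add: power_divide field_simps)
  then have eq: "p ^ d * 10 ^ 8 = q ^ d"
    by (simp only: of_int_eq_iff)
  have "p \<noteq> 0" using eq \<open>q > 0\<close> \<open>d > 0\<close> by (auto simp: zero_power)
  then have "d dvd multiplicity (2::int) (10 ^ 8)"
    using dvd_multiplicity_if_mult_power_eq_power[OF _ _ _ eq] \<open>q > 0\<close> by simp
  with assms multiplicity_2_power_10[of 8] show False by simp
qed

lemma eq_if_sin_cos_eq_at_irrational_multiple: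
  fixes x y w :: real
  assumes "w \<notin> \<rat>"
    and "sin x = sin y" "cos x = cos y"
    and "sin (w * x) = sin (w * y)" "cos (w * x) = cos (w * y)"
  shows "x = y"
proof -
  obtain k :: int where k: "x = y + 2 * pi * k"
    using assms(2,3) sin_cos_eq_iff by blast
  obtain m :: int where m: "w * x = w * y + 2 * pi * m"
    using assms(4,5) sin_cos_eq_iff by blast
  have "w * k = m"
    using k m by (simp add: algebra_simps)
  have "k = 0"
  proof (rule ccontr)
    assume "k \<noteq> 0"
    with \<open>w * k = m\<close> have "w = of_int m / of_int k"
      by (simp add: field_simps)
    with assms(1) show False by simp
  qed
  then show ?thesis using k by simp
qed

lemma nth_pe:
  "j < d \<Longrightarrow> pe d x ! j =
     (if even j then sin (omega d (j div 2) * x) else cos (omega d (j div 2) * x))"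
  by (simp add: pe_def)

lemma length_pe [simp]: "length (pe d x) = d"
  by (simp add: pe_def)

lemma inj_pe:
  assumes "d \<ge> 4" "\<not> d dvd 8"
  shows "inj (pe d)"
proof
  fix x y assume eq: "pe d x = pe d y"
  have entry: "pe d x ! j = pe d y ! j" for j
    using eq by simp
  have "omega d 1 \<notin> \<rat>"
    using assms by (intro omega_1_not_rational) simp_all
  moreover have "sin x = sin y" "cos x = cos y"
    using entry[of 0] entry[of 1] assms(1) by (simp_all add: nth_pe)
  moreover have "sin (omega d 1 * x) = sin (omega d 1 * y)" "cos (omega d 1 * x) = cos (omega d 1 * y)"
    using entry[of 2] entry[of 3] assms(1) by (simp_all add: nth_pe)
  ultimately show "x = y"
    by (rule eq_if_sin_cos_eq_at_irrational_multiple)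
qed

theorem mainTheorem2:
  fixes d :: nat
  assumes "d > 0" and "even d" and "d \<notin> {2, 4, 8}"
  shows "inj_on (\<lambda>a::nat. pe d (real a)) {a. a > 0}
       \<and> inj_on (\<lambda>(a::nat, b::nat). pe d (real a) @ pe d (real b)) ({a. a > 0} \<times> {b. b > 0})"
proof -
  have "d \<ge> 4" using assms by (auto elim!: evenE)
  moreover have "\<not> d dvd 8"
  proof
    assume "d dvd 8"
    then have "d \<le> 8" by (simp add: dvd_imp_le)
    with assms \<open>d \<ge> 4\<close> have "d = 6" by (auto elim!: evenE)
    with \<open>d dvd 8\<close> show False by simp
  qed
  ultimately have inj: "inj (pe d)" by (rule inj_pe)
  then have "inj (\<lambda>a::nat. pe d (real a))"
    by (auto intro!: injI simp: inj_eq)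
  moreover have "inj (\<lambda>(a::nat, b::nat). pe d (real a) @ pe d (real b))"
    using inj by (auto intro!: injI simp: inj_eq)
  ultimately show ?thesis by (auto intro: inj_on_subset)
qed

end
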